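(* Let $R$ be a commutative domain, $B=R(t,\sigma,H,J)$, assume $\sigma^n=\mathrm{id}_R$ and let $\mathcal O$ be a $\sigma$-orbit in $\operatorname{Maxspec}(R)$ of size $n$ containing at least one break. Let $M$ be a simple $B$-module which is an $R$-weight module with $\operatorname{Supp}_R(M)\subseteq\mathcal O$, and let $\mathfrak m\in\mathcal O$ be a break. Then $\mathfrak m$ is not both a $J$-break and an $H$-break for $M$. If $\mathfrak m$ is a $J$-break (resp. $H$-break) for $M$, then every break in $\mathcal O$ is a $J$-break (resp. $H$-break) for $M$, and $\operatorname{Supp}_R(M)=\mathcal O$.
   Context: $\Bbbk$ is a field; all algebras are associative unital $\Bbbk$-algebras. For an algebra $R$ and $\sigma\in\operatorname{Aut}_\Bbbk(R)$, $R[t,t^{-1};\sigma]$ is the skew Laurent ring: generated over $R$ by $t,t^{-1}$ with $tt^{-1}=t^{-1}t=1$ and $t^{\pm1}r=\sigma^{\pm1}(r)t^{\pm1}$ for $r\in R$. Given two-sided ideals $H,J$ of $R$, set $I^{(0)}=R$, $I^{(n)}=J\sigma(J)\cdots\sigma^{n-1}(J)$ for $n\ge1$, and $I^{(n)}=\sigma^{-1}(H)\sigma^{-2}(H)\cdots\sigma^{n}(H)$ for $n\le-1$; it is assumed throughout that $I^{(n)}\neq0$ for all $n\in\mathbb Z$. The Bell–Rogalski (BR) algebra is $R(t,\sigma,H,J)=\bigoplus_{n\in\mathbb Z}I^{(n)}t^n\subseteq R[t,t^{-1};\sigma]$. For $R$ commutative, $\mathcal S(B)=\{\mathfrak p\in\operatorname{Spec}(R):\mathfrak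 p\supseteq HJ\}$; a maximal ideal $\mathfrak m$ is a break if $\sigma(\mathfrak m)\in\mathcal S(B)$. A left $B$-module $M$ is an $R$-weight module if $M=\bigoplus_{\mathfrak m}M_{\mathfrak m}$, $M_{\mathfrak m}=\{v:\mathfrak mv=0\}$, each $\dim_{R/\mathfrak m}M_{\mathfrak m}<\infty$; $\operatorname{Supp}_R(M)=\{\mathfrak m:M_{\mathfrak m}\ne0\}$. $\sigma$-orbits are orbits of $k\cdot\mathfrak m=\sigma^k(\mathfrak m)$. For a weight module $M$ and a break $\mathfrak m$: $\mathfrak m$ is a $J$-break for $M$ if there exist $j\in J$ and $v\in M_{\mathfrak m}$ with $(jt)v\neq0$; $\mathfrak m$ is an $H$-break for $M$ if there exist $h\in H$ and $w\in M_{\sigma(\mathfrak m)}$ with $(\sigma^{-1}(h)t^{-1})w\neq0$. *)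

theory Defs
  imports Main
begin

definition is_ideal :: "'r::comm_ring_1 set \<Rightarrow> bool" where
  "is_ideal I \<longleftrightarrow> 0 \<in> I \<and> (\<forall>a\<in>I. \<forall>b\<in>I. a + b \<in> I) \<and> (\<forall>r a. a \<in> I \<longrightarrow> r * a \<in> I)"

definition ideal_prod :: "'r::comm_ring_1 set \<Rightarrow> 'r set \<Rightarrow> 'r set" where
  "ideal_prod I J = \<Inter>{K. is_ideal K \<and> {a * b | a b. a \<in> I \<and> b \<in> J} \<subseteq> K}"

definition maximal_ideal :: "'r::comm_ring_1 set \<Rightarrow> bool" where
  "maximal_ideal m \<longleftrightarrow> is_ideal m \<and> m \<noteq> UNIV \<and>
     (\<forall>K. is_ideal K \<and> m \<subseteq> K \<longrightarrow> K = m \<or> K = UNIV)"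

definition prime_ideal :: "'r::comm_ring_1 set \<Rightarrow> bool" where
  "prime_ideal p \<longleftrightarrow> is_ideal p \<and> p \<noteq> UNIV \<and> (\<forall>a b. a * b \<in> p \<longrightarrow> a \<in> p \<or> b \<in> p)"

definition ring_aut :: "('r::comm_ring_1 \<Rightarrow> 'r) \<Rightarrow> bool" where
  "ring_aut \<sigma> \<longleftrightarrow> bij \<sigma> \<and> (\<forall>a b. \<sigma> (a + b) = \<sigma> a + \<sigma> b) \<and>
     (\<forall>a b. \<sigma> (a * b) = \<sigma> a * \<sigma> b) \<and> \<sigma> 1 = 1"

definition alg_struct :: "('k::field \<Rightarrow> 'r::comm_ring_1) \<Rightarrow> bool" where
  "alg_struct \<phi> \<longleftrightarrow> (\<forall>a b. \<phi> (a + b) = \<phi> a + \<phi> b) \<and> (\<forall>a b. \<phi> (a * b) = \<phi> a * \<phi> b) \<and> \<phi> 1 = 1"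

definition sigma_pow :: "('r \<Rightarrow> 'r) \<Rightarrow> int \<Rightarrow> 'r \<Rightarrow> 'r" where
  "sigma_pow \<sigma> k = (if 0 \<le> k then \<sigma> ^^ nat k else inv \<sigma> ^^ nat (- k))"

fun Ipos :: "('r::comm_ring_1 \<Rightarrow> 'r) \<Rightarrow> 'r set \<Rightarrow> nat \<Rightarrow> 'r set" where
  "Ipos \<sigma> J 0 = UNIV"
| "Ipos \<sigma> J (Suc k) = ideal_prod (Ipos \<sigma> J k) ((\<sigma> ^^ k) ` J)"

fun Ineg :: "('r::comm_ring_1 \<Rightarrow> 'r) \<Rightarrow> 'r set \<Rightarrow> nat \<Rightarrow> 'r set" where
  "Ineg \<sigma> H 0 = UNIV"
| "Ineg \<sigma> H (Suc k) = ideal_prod (Ineg \<sigma> H k) (sigma_pow \<sigma> (- (int k + 1)) ` H)"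

definition Iseq :: "('r::comm_ring_1 \<Rightarrow> 'r) \<Rightarrow> 'r set \<Rightarrow> 'r set \<Rightarrow> int \<Rightarrow> 'r set" where
  "Iseq \<sigma> H J n = (if 0 \<le> n then Ipos \<sigma> J (nat n) else Ineg \<sigma> H (nat (- n)))"

text \<open>Elements of the skew Laurent ring R[t,t^-1;sigma]: finitely supported
  coefficient functions  n \<mapsto> coefficient of t^n.\<close>
definition monom :: "'r::zero \<Rightarrow> int \<Rightarrow> int \<Rightarrow> 'r" where
  "monom r k = (\<lambda>n. if n = k then r else 0)"

definition sl_mult :: "('r::comm_ring_1 \<Rightarrow> 'r) \<Rightarrow> (int \<Rightarrow> 'r) \<Rightarrow> (int \<Rightarrow> 'r) \<Rightarrow> int \<Rightarrow> 'r" where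
  "sl_mult \<sigma> f g = (\<lambda>n. \<Sum>k\<in>{k. f k \<noteq> 0}. f k * sigma_pow \<sigma> k (g (n - k)))"

definition BR :: "('r::comm_ring_1 \<Rightarrow> 'r) \<Rightarrow> 'r set \<Rightarrow> 'r set \<Rightarrow> (int \<Rightarrow> 'r) set" where
  "BR \<sigma> H J = {f. finite {n. f n \<noteq> 0} \<and> (\<forall>n. f n \<in> Iseq \<sigma> H J n)}"

definition bmodule :: "('r::comm_ring_1 \<Rightarrow> 'r) \<Rightarrow> 'r set \<Rightarrow> 'r set \<Rightarrow>
    ((int \<Rightarrow> 'r) \<Rightarrow> 'm::ab_group_add \<Rightarrow> 'm) \<Rightarrow> bool" where
  "bmodule \<sigma> H J act \<longleftrightarrow>
     (\<forall>f\<in>BR \<sigma> H J. \<forall>v w. act f (v + w) = act f v + act f w) \<and>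
     (\<forall>f\<in>BR \<sigma> H J. \<forall>g\<in>BR \<sigma> H J. \<forall>v. act (\<lambda>n. f n + g n) v = act f v + act g v) \<and>
     (\<forall>f\<in>BR \<sigma> H J. \<forall>g\<in>BR \<sigma> H J. \<forall>v. act (sl_mult \<sigma> f g) v = act f (act g v)) \<and>
     (\<forall>v. act (monom 1 0) v = v)"

definition bsubmodule :: "('r::comm_ring_1 \<Rightarrow> 'r) \<Rightarrow> 'r set \<Rightarrow> 'r set \<Rightarrow>
    ((int \<Rightarrow> 'r) \<Rightarrow> 'm::ab_group_add \<Rightarrow> 'm) \<Rightarrow> 'm set \<Rightarrow> bool" where
  "bsubmodule \<sigma> H J act N \<longleftrightarrow> 0 \<in> N \<and> (\<forall>v\<in>N. \<forall>w\<in>N. v + w \<in> N) \<and> (\<forall>v\<in>N. - v \<in> N) \<and>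
     (\<forall>f\<in>BR \<sigma> H J. \<forall>v\<in>N. act f v \<in> N)"

definition simple_bmodule :: "('r::comm_ring_1 \<Rightarrow> 'r) \<Rightarrow> 'r set \<Rightarrow> 'r set \<Rightarrow>
    ((int \<Rightarrow> 'r) \<Rightarrow> 'm::ab_group_add \<Rightarrow> 'm) \<Rightarrow> bool" where
  "simple_bmodule \<sigma> H J act \<longleftrightarrow> bmodule \<sigma> H J act \<and> (\<exists>v::'m. v \<noteq> 0) \<and>
     (\<forall>N. bsubmodule \<sigma> H J act N \<longrightarrow> N = {0} \<or> N = UNIV)"

text \<open>R acts on M through r \<mapsto> r t^0.\<close>
definition weight_space :: "((int \<Rightarrow> 'r::comm_ring_1) \<Rightarrow> 'm::ab_group_add \<Rightarrow> 'm) \<Rightarrow> 'r set \<Rightarrow> 'm set" where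
  "weight_space act m = {v. \<forall>r\<in>m. act (monom r 0) v = 0}"

text \<open>R-weight module: M is the (internal) direct sum of its weight spaces M_m over
  maximal ideals m, each M_m finite-dimensional over R/m (equivalently, finitely
  generated as an R-module, since R acts on M_m through R/m).\<close>
definition weight_module :: "((int \<Rightarrow> 'r::comm_ring_1) \<Rightarrow> 'm::ab_group_add \<Rightarrow> 'm) \<Rightarrow> bool" where
  "weight_module act \<longleftrightarrow>
     (\<forall>v. \<exists>!f :: 'r set \<Rightarrow> 'm. finite {m. f m \<noteq> 0} \<and>
          (\<forall>m. f m \<noteq> 0 \<longrightarrow> maximal_ideal m \<and> f m \<in> weight_space act m) \<and>
          v = (\<Sum>m\<in>{m. f m \<noteq> 0}. f m)) \<and>
     (\<forall>m. maximal_ideal m \<longrightarrow>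
        (\<exists>S. finite S \<and> S \<subseteq> weight_space act m \<and>
           (\<forall>v\<in>weight_space act m. \<exists>c. v = (\<Sum>s\<in>S. act (monom (c s) 0) s))))"

definition supp_R :: "((int \<Rightarrow> 'r::comm_ring_1) \<Rightarrow> 'm::ab_group_add \<Rightarrow> 'm) \<Rightarrow> 'r set set" where
  "supp_R act = {m. maximal_ideal m \<and> weight_space act m \<noteq> {0}}"

definition sigma_orbit :: "('r \<Rightarrow> 'r) \<Rightarrow> 'r set \<Rightarrow> 'r set set" where
  "sigma_orbit \<sigma> m = {sigma_pow \<sigma> k ` m | k. True}"

definition S_B :: "'r::comm_ring_1 set \<Rightarrow> 'r set \<Rightarrow> 'r set set" where
  "S_B H J = {p. prime_ideal p \<and> ideal_prod H J \<subseteq> p}"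

definition is_break :: "('r::comm_ring_1 \<Rightarrow> 'r) \<Rightarrow> 'r set \<Rightarrow> 'r set \<Rightarrow> 'r set \<Rightarrow> bool" where
  "is_break \<sigma> H J m \<longleftrightarrow> maximal_ideal m \<and> \<sigma> ` m \<in> S_B H J"

definition J_break :: "('r::comm_ring_1 \<Rightarrow> 'r) \<Rightarrow> 'r set \<Rightarrow> 'r set \<Rightarrow>
    ((int \<Rightarrow> 'r) \<Rightarrow> 'm::ab_group_add \<Rightarrow> 'm) \<Rightarrow> 'r set \<Rightarrow> bool" where
  "J_break \<sigma> H J act m \<longleftrightarrow> is_break \<sigma> H J m \<and>
     (\<exists>j\<in>J. \<exists>v\<in>weight_space act m. act (monom j 1) v \<noteq> 0)"

definition H_break :: "('r::comm_ring_1 \<Rightarrow> 'r) \<Rightarrow> 'r set \<Rightarrow> 'r set \<Rightarrow>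
    ((int \<Rightarrow> 'r) \<Rightarrow> 'm::ab_group_add \<Rightarrow> 'm) \<Rightarrow> 'r set \<Rightarrow> bool" where
  "H_break \<sigma> H J act m \<longleftrightarrow> is_break \<sigma> H J m \<and>
     (\<exists>h\<in>H. \<exists>w\<in>weight_space act (\<sigma> ` m). act (monom (inv \<sigma> h) (-1)) w \<noteq> 0)"

end

theory Submission
  imports Defs
begin

text \<open>Write P k for \<sigma>^k(m). An element c t^k of B maps the weight space of P a into that of
  P (a + k), and since \<sigma>^n = id and the orbit has exactly n points, P a = P b iff n divides
  a - b. As M is simple, any nonzero weight vector w generates M; multiplying by an element of R
  that is 1 modulo P b and 0 modulo the other points of the orbit shows that the weight space
  of P b lies in every R-submodule Z containing all components c t^k w of weight P b.

  At the break m we have HJ \<subseteq> \<sigma>(m), so h t^-1 j t and j t h t^-1 act on the weight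
  spaces of m and \<sigma>(m) by elements of m and \<sigma>(m), i.e. trivially. If j t v \<noteq> 0 for some
  v of weight m, the vector w = j t v is killed by H t^-1; writing the elements of
  I(k + 1) = J \<sigma>(J) \<dots> \<sigma>^k(J) as sums of products and peeling off one factor at a time, all
  components of w of weight \<sigma>(m) are killed by H t^-1 as well, which excludes an H-break
  at m. Similarly, if J t acted trivially on the weight space of some other point
  \<sigma>^(l+1)(m), l + 1 < n, every component of w of weight m would pass through that point and
  vanish, contradicting v \<noteq> 0; so J-breaks spread over the whole orbit and every weight space
  on it is nonzero. H-breaks are handled symmetrically.\<close>

section \<open>Ideals of a commutative ring\<close>

lemma ideal_zero: "is_ideal I \<Longrightarrow> 0 \<in> I"
  by (simp add: is_ideal_def)

lemma ideal_add: "is_ideal I \<Longrightarrow> a \<in> I \<Longrightarrow> b \<in> I \<Longrightarrow> a + b \<in> I"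
  by (simp add: is_ideal_def)

lemma ideal_mult_left: "is_ideal I \<Longrightarrow> a \<in> I \<Longrightarrow> r * a \<in> I"
  by (simp add: is_ideal_def)

lemma ideal_mult_right: "is_ideal I \<Longrightarrow> a \<in> I \<Longrightarrow> a * r \<in> I"
  by (metis ideal_mult_left mult.commute)

lemma ideal_uminus: "is_ideal I \<Longrightarrow> a \<in> I \<Longrightarrow> - a \<in> I"
  by (metis ideal_mult_left mult_minus1)

lemma ideal_diff: "is_ideal I \<Longrightarrow> a \<in> I \<Longrightarrow> b \<in> I \<Longrightarrow> a - b \<in> I"
  by (metis ideal_add ideal_uminus diff_conv_add_uminus)

lemma ideal_UNIV: "is_ideal UNIV"
  by (simp add: is_ideal_def)

lemma ideal_eq_UNIV: "is_ideal I \<Longrightarrow> 1 \<in> I \<Longrightarrow> I = UNIV"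
  by (metis UNIV_eq_I ideal_mult_left mult.right_neutral)

lemma is_ideal_ideal_prod: "is_ideal (ideal_prod A B)"
  unfolding ideal_prod_def is_ideal_def by auto

lemma ideal_prod_mem: "a \<in> A \<Longrightarrow> b \<in> B \<Longrightarrow> a * b \<in> ideal_prod A B"
  unfolding ideal_prod_def by auto

lemma ideal_prod_least:
  "is_ideal K \<Longrightarrow> (\<And>a b. a \<in> A \<Longrightarrow> b \<in> B \<Longrightarrow> a * b \<in> K) \<Longrightarrow> ideal_prod A B \<subseteq> K"
  unfolding ideal_prod_def by auto

lemma ideal_prod_subset_left: "is_ideal A \<Longrightarrow> ideal_prod A B \<subseteq> A"
  by (rule ideal_prod_least) (auto intro: ideal_mult_right)

lemma maximal_ideal_is_ideal: "maximal_ideal p \<Longrightarrow> is_ideal p"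
  by (simp add: maximal_ideal_def)

lemma maximal_ideals_comaximal:
  assumes p: "maximal_ideal p" and q: "maximal_ideal q" and "p \<noteq> q"
  shows "\<exists>a\<in>p. \<exists>b\<in>q. a + b = 1"
proof -
  define K where "K = {a + b | a b. a \<in> p \<and> b \<in> q}"
  have pI: "is_ideal p" and qI: "is_ideal q"
    using p q by (auto simp: maximal_ideal_def)
  have "is_ideal K"
    unfolding is_ideal_def K_def
  proof (intro conjI allI ballI impI)
    show "0 \<in> {a + b |a b. a \<in> p \<and> b \<in> q}"
      using ideal_zero[OF pI] ideal_zero[OF qI] by force
  next
    fix x y assume "x \<in> {a + b |a b. a \<in> p \<and> b \<in> q}" "y \<in> {a + b |a b. a \<in> p \<and> b \<in> q}"
    then obtain a b a' b' where "x + y = (a + a') + (b + b')" "a + a' \<in> p" "b + b' \<in> q"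
      using ideal_add[OF pI] ideal_add[OF qI] by (force simp: algebra_simps)
    then show "x + y \<in> {a + b |a b. a \<in> p \<and> b \<in> q}" by blast
  next
    fix r x assume "x \<in> {a + b |a b. a \<in> p \<and> b \<in> q}"
    then obtain a b where "r * x = r * a + r * b" "r * a \<in> p" "r * b \<in> q"
      using ideal_mult_left[OF pI] ideal_mult_left[OF qI] by (force simp: distrib_left)
    then show "r * x \<in> {a + b |a b. a \<in> p \<and> b \<in> q}" by blast
  qed
  moreover have "p \<subseteq> K" "q \<subseteq> K"
    unfolding K_def using ideal_zero[OF pI] ideal_zero[OF qI] by force+
  ultimately have "K = UNIV"
    using p q \<open>p \<noteq> q\<close> unfolding maximal_ideal_def by blast
  then have "1 \<in> K" by simp
  then show ?thesis
    unfolding K_def by force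
qed

lemma maximal_ideals_separating_element:
  assumes p: "maximal_ideal p" and "finite Q" "\<And>q. q \<in> Q \<Longrightarrow> maximal_ideal q" "p \<notin> Q"
  shows "\<exists>r. r - 1 \<in> p \<and> (\<forall>q\<in>Q. r \<in> q)"
  using assms(2-)
proof (induction Q rule: finite_induct)
  case empty
  then show ?case
    using ideal_zero[OF maximal_ideal_is_ideal[OF p]] by (metis diff_self empty_iff)
next
  case (insert q Q)
  then obtain r where r: "r - 1 \<in> p" "\<forall>q\<in>Q. r \<in> q" by auto
  have pI: "is_ideal p" using p by (rule maximal_ideal_is_ideal)
  obtain a b where ab: "a \<in> p" "b \<in> q" "a + b = 1"
    using maximal_ideals_comaximal[OF p, of q] insert by auto
  have "r * b - 1 = r * (a + b) - 1 - r * a"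
    by (simp add: algebra_simps)
  also have "\<dots> \<in> p"
    using ideal_diff[OF pI r(1) ideal_mult_left[OF pI ab(1)]] ab(3) by simp
  finally have "r * b - 1 \<in> p" .
  moreover have "\<forall>q'\<in>insert q Q. r * b \<in> q'"
    using r(2) ab(2) insert.prems by (auto intro: ideal_mult_left ideal_mult_right maximal_ideal_is_ideal)
  ultimately show ?case by blast
qed

section \<open>Integer powers of a ring automorphism\<close>

lemma funpow_ring_hom:
  fixes f :: "'r::comm_ring_1 \<Rightarrow> 'r"
  assumes "\<forall>a b. f (a + b) = f a + f b" "\<forall>a b. f (a * b) = f a * f b" "f 1 = 1"
  shows "(f ^^ i) (a + b) = (f ^^ i) a + (f ^^ i) b \<and> (f ^^ i) (a * b) = (f ^^ i) a * (f ^^ i) b \<and>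
    (f ^^ i) 1 = 1"
  by (induction i arbitrary: a b) (simp_all add: assms)

locale ring_automorphism =
  fixes \<sigma> :: "'r::comm_ring_1 \<Rightarrow> 'r"
  assumes aut: "ring_aut \<sigma>"
begin

abbreviation S :: "int \<Rightarrow> 'r \<Rightarrow> 'r" where "S \<equiv> sigma_pow \<sigma>"

lemma bij_sigma: "bij \<sigma>"
  using aut by (simp add: ring_aut_def)

lemma S_0 [simp]: "S 0 = id"
  by (simp add: sigma_pow_def)

lemma S_1: "S 1 = \<sigma>"
  by (simp add: sigma_pow_def)

lemma S_minus_1: "S (-1) = inv \<sigma>"
  by (simp add: sigma_pow_def)

lemma S_of_nat: "S (int k) = \<sigma> ^^ k"
  by (simp add: sigma_pow_def)

lemma S_plus_1: "S (k + 1) = \<sigma> \<circ> S k"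
proof -
  have \<sigma>_inv: "\<sigma> \<circ> inv \<sigma> = id"
    using bij_sigma by (simp add: bij_def flip: surj_iff)
  consider "0 \<le> k" | "k = -1" | "k < -1" by linarith
  then show ?thesis
  proof cases
    case 1
    then show ?thesis by (simp add: sigma_pow_def nat_add_distrib)
  next
    case 2
    then show ?thesis by (simp add: sigma_pow_def \<sigma>_inv)
  next
    case 3
    then have "nat (- k) = Suc (nat (- (k + 1)))" by simp
    then show ?thesis
      using 3 by (simp add: sigma_pow_def o_assoc \<sigma>_inv)
  qed
qed

lemma S_minus_1_comp: "S (k - 1) = inv \<sigma> \<circ> S k"
proof -
  have "inv \<sigma> \<circ> \<sigma> = id"
    using bij_sigma by (simp add: bij_def flip: inj_iff)
  then show ?thesis
    using S_plus_1[of "k - 1"] by (simp add: o_assoc)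
qed

lemma S_comp: "S a \<circ> S b = S (a + b)"
proof (induction a rule: int_induct[of _ 0])
  case (step1 i)
  have "S (i + 1) \<circ> S b = \<sigma> \<circ> (S i \<circ> S b)"
    by (simp add: S_plus_1 o_assoc)
  also have "\<dots> = \<sigma> \<circ> S (i + b)"
    by (simp only: step1.IH)
  also have "\<dots> = S (i + 1 + b)"
    using S_plus_1[of "i + b"] by (simp add: ac_simps)
  finally show ?case .
next
  case (step2 i)
  have "S (i - 1) \<circ> S b = inv \<sigma> \<circ> (S i \<circ> S b)"
    by (simp add: S_minus_1_comp o_assoc)
  also have "\<dots> = inv \<sigma> \<circ> S (i + b)"
    by (simp only: step2.IH)
  also have "\<dots> = S (i - 1 + b)"
    using S_minus_1_comp[of "i + b"] by (simp add: algebra_simps)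
  finally show ?case .
qed simp

lemma S_add: "S a (S b x) = S (a + b) x"
  using S_comp[of a b] by (metis comp_apply)

lemma S_cancel [simp]: "S (- k) (S k x) = x" "S k (S (- k) x) = x"
  by (simp_all add: S_add)

lemma S_ring_hom: "S k (a + b) = S k a + S k b \<and> S k (a * b) = S k a * S k b \<and> S k 1 = 1"
proof -
  have nat_hom: "S (int i) (a + b) = S (int i) a + S (int i) b \<and>
      S (int i) (a * b) = S (int i) a * S (int i) b \<and> S (int i) 1 = 1" for i a b
    using funpow_ring_hom[of \<sigma> i a b] aut by (simp add: S_of_nat ring_aut_def)
  show ?thesis
  proof (cases "0 \<le> k")
    case True
    then obtain i where "k = int i"
      using nonneg_int_cases by blast
    then show ?thesis using nat_hom by auto
  next
    case False
    then obtain i where i: "- k = int i"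
      using nonneg_int_cases[of "- k"] by force
    \<comment> \<open>S k is the inverse of the ring homomorphism S (- k)\<close>
    have hom: "S (- k) (x + y) = S (- k) x + S (- k) y" "S (- k) (x * y) = S (- k) x * S (- k) y"
      "S (- k) 1 = 1" for x y
      using nat_hom[of i] i by simp_all
    have "S k (a + b) = S k (S (- k) (S k a + S k b))"
      by (simp only: hom S_cancel)
    moreover have "S k (a * b) = S k (S (- k) (S k a * S k b))"
      by (simp only: hom S_cancel)
    moreover have "S k 1 = S k (S (- k) 1)"
      by (simp only: hom)
    ultimately show ?thesis
      by simp
  qed
qed

lemmas S_hom = S_ring_hom[THEN conjunct1] S_ring_hom[THEN conjunct2, THEN conjunct1]
  S_ring_hom[THEN conjunct2, THEN conjunct2]

lemma S_zero [simp]: "S k 0 = 0"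
  by (metis S_hom(1) add_cancel_right_right)

lemma S_image_image: "S a ` S b ` X = S (a + b) ` X"
  by (auto simp: image_image S_add)

lemma surj_S: "S k ` UNIV = UNIV"
  by (metis S_cancel(2) UNIV_I UNIV_eq_I image_eqI)

lemma is_ideal_S_image: "is_ideal X \<Longrightarrow> is_ideal (S k ` X)"
  unfolding is_ideal_def
proof (intro conjI allI ballI impI)
  assume X: "0 \<in> X \<and> (\<forall>a\<in>X. \<forall>b\<in>X. a + b \<in> X) \<and> (\<forall>r a. a \<in> X \<longrightarrow> r * a \<in> X)"
  then show "0 \<in> S k ` X"
    by (metis S_zero image_eqI)
  fix x y assume "x \<in> S k ` X" "y \<in> S k ` X"
  then show "x + y \<in> S k ` X"
    using X by (auto simp flip: S_hom(1))
next
  assume X: "0 \<in> X \<and> (\<forall>a\<in>X. \<forall>b\<in>X. a + b \<in> X) \<and> (\<forall>r a. a \<in> X \<longrightarrow> r * a \<in> X)"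
  fix r x assume "x \<in> S k ` X"
  then obtain u where u: "u \<in> X" "x = S k u" by auto
  then have "r * x = S k (S (- k) r * u)"
    by (simp add: S_hom)
  then show "r * x \<in> S k ` X"
    using X u by blast
qed

lemma maximal_ideal_S_image:
  assumes p: "maximal_ideal p"
  shows "maximal_ideal (S k ` p)"
  unfolding maximal_ideal_def
proof (intro conjI allI impI)
  show "is_ideal (S k ` p)"
    by (rule is_ideal_S_image[OF maximal_ideal_is_ideal[OF p]])
  show "S k ` p \<noteq> UNIV"
  proof
    assume "S k ` p = UNIV"
    then have "S (- k) 1 \<in> p"
      by (metis S_cancel(1) UNIV_I imageE)
    then show False
      using p ideal_eq_UNIV by (auto simp: S_hom maximal_ideal_def)
  qed
next
  fix K assume K: "is_ideal K \<and> S k ` p \<subseteq> K"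
  then have "p \<subseteq> S (- k) ` K"
    by (force simp: S_image_image intro: image_eqI[of _ "S (- k)"])
  moreover have "is_ideal (S (- k) ` K)"
    using K is_ideal_S_image by blast
  ultimately have "S (- k) ` K = p \<or> S (- k) ` K = UNIV"
    using p by (auto simp: maximal_ideal_def)
  then show "K = S k ` p \<or> K = UNIV"
    using S_image_image[of k "- k" K] surj_S[of k] by auto
qed

end

section \<open>The graded pieces of the BR algebra\<close>

locale br_algebra = ring_automorphism \<sigma> for \<sigma> :: "'r::comm_ring_1 \<Rightarrow> 'r" +
  fixes H J :: "'r set"
  assumes H: "is_ideal H" and J: "is_ideal J"
begin

abbreviation I :: "int \<Rightarrow> 'r set" where "I \<equiv> Iseq \<sigma> H J"

lemma is_ideal_Ipos: "is_ideal (Ipos \<sigma> J k)"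
  by (cases k) (auto simp: ideal_UNIV is_ideal_ideal_prod)

lemma is_ideal_Ineg: "is_ideal (Ineg \<sigma> H k)"
  by (cases k) (auto simp: ideal_UNIV is_ideal_ideal_prod)

lemma is_ideal_I: "is_ideal (I k)"
  by (simp add: Iseq_def is_ideal_Ipos is_ideal_Ineg)

lemma I_0 [simp]: "I 0 = UNIV"
  by (simp add: Iseq_def)

lemma I_of_nat: "I (int k) = Ipos \<sigma> J k"
  by (simp add: Iseq_def)

lemma I_minus_of_nat: "I (- int k) = Ineg \<sigma> H k"
  by (cases "k = 0") (auto simp: Iseq_def)

lemma Ipos_Suc: "Ipos \<sigma> J (Suc k) = ideal_prod (Ipos \<sigma> J k) (S (int k) ` J)"
  by (simp add: S_of_nat)

lemma Ineg_Suc: "Ineg \<sigma> H (Suc k) = ideal_prod (Ineg \<sigma> H k) (S (- int k - 1) ` H)"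
  using Ineg.simps(2)[of \<sigma> H k] by (simp only: minus_add_distrib diff_conv_add_uminus)

declare Ipos.simps(2) [simp del] Ineg.simps(2) [simp del]

lemma J_subset_I_1: "J \<subseteq> I 1"
  using ideal_prod_mem[of 1 UNIV _ J] by (auto simp: Iseq_def Ipos_Suc)

lemma H_subset_I_minus_1: "S (-1) ` H \<subseteq> I (-1)"
  using ideal_prod_mem[of 1 UNIV _ "S (-1) ` H"] by (auto simp: Iseq_def Ineg_Suc)

lemma Ipos_antimono: "k' \<le> k \<Longrightarrow> Ipos \<sigma> J k \<subseteq> Ipos \<sigma> J k'"
proof (induction k)
  case (Suc k)
  then show ?case
    using ideal_prod_subset_left[OF is_ideal_Ipos] by (metis Ipos_Suc le_Suc_eq order.trans order.refl)
qed simp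

lemma Ineg_antimono: "k' \<le> k \<Longrightarrow> Ineg \<sigma> H k \<subseteq> Ineg \<sigma> H k'"
proof (induction k)
  case (Suc k)
  then show ?case
    using ideal_prod_subset_left[OF is_ideal_Ineg] by (metis Ineg_Suc le_Suc_eq order.trans order.refl)
qed simp

lemma is_ideal_S_preimage: "is_ideal K \<Longrightarrow> is_ideal {d. c * S a d \<in> K}"
  unfolding is_ideal_def
  by (auto simp: S_hom distrib_left) (metis mult.left_commute)

lemma Ipos_mult:
  "c \<in> Ipos \<sigma> J a \<Longrightarrow> d \<in> Ipos \<sigma> J b \<Longrightarrow> c * S (int a) d \<in> Ipos \<sigma> J (a + b)"
proof (induction b arbitrary: d)
  case 0
  then show ?case by (simp add: ideal_mult_right is_ideal_Ipos)
next
  case (Suc b)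
  have "ideal_prod (Ipos \<sigma> J b) (S (int b) ` J) \<subseteq> {d. c * S (int a) d \<in> Ipos \<sigma> J (a + Suc b)}"
  proof (rule ideal_prod_least[OF is_ideal_S_preimage[OF is_ideal_Ipos]], clarify)
    fix d j assume "d \<in> Ipos \<sigma> J b" "j \<in> J"
    then have "(c * S (int a) d) * S (int (a + b)) j \<in> Ipos \<sigma> J (a + Suc b)"
      using Suc by (simp add: Ipos_Suc ideal_prod_mem)
    then show "c * S (int a) (d * S (int b) j) \<in> Ipos \<sigma> J (a + Suc b)"
      by (simp add: S_hom S_add mult.assoc)
  qed
  then show ?case
    using Suc.prems(2) by (auto simp: Ipos_Suc)
qed

lemma Ineg_mult:
  "c \<in> Ineg \<sigma> H a \<Longrightarrow> d \<in> Ineg \<sigma> H b \<Longrightarrow> c * S (- int a) d \<in> Ineg \<sigma> H (a + b)"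
proof (induction b arbitrary: d)
  case 0
  then show ?case by (simp add: ideal_mult_right is_ideal_Ineg)
next
  case (Suc b)
  have "ideal_prod (Ineg \<sigma> H b) (S (- int b - 1) ` H) \<subseteq> {d. c * S (- int a) d \<in> Ineg \<sigma> H (a + Suc b)}"
  proof (rule ideal_prod_least[OF is_ideal_S_preimage[OF is_ideal_Ineg]], clarify)
    fix d h assume "d \<in> Ineg \<sigma> H b" "h \<in> H"
    then have "(c * S (- int a) d) * S (- int (a + b) - 1) h \<in> Ineg \<sigma> H (a + Suc b)"
      using Suc by (simp add: Ineg_Suc ideal_prod_mem)
    then show "c * S (- int a) (d * S (- int b - 1) h) \<in> Ineg \<sigma> H (a + Suc b)"
      by (simp add: S_hom S_add algebra_simps)
  qed
  then show ?case
    using Suc.prems(2) by (auto simp: Ineg_Suc)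
qed

lemma Ipos_shift_down: "d \<in> Ipos \<sigma> J (a + b) \<Longrightarrow> S (- int a) d \<in> Ipos \<sigma> J b"
proof (induction b arbitrary: d)
  case (Suc b)
  have "ideal_prod (Ipos \<sigma> J (a + b)) (S (int (a + b)) ` J) \<subseteq> {d. 1 * S (- int a) d \<in> Ipos \<sigma> J (Suc b)}"
  proof (rule ideal_prod_least[OF is_ideal_S_preimage[OF is_ideal_Ipos]], clarify)
    fix d j assume "d \<in> Ipos \<sigma> J (a + b)" "j \<in> J"
    then have "S (- int a) d * S (int b) j \<in> Ipos \<sigma> J (Suc b)"
      using Suc.IH by (simp add: Ipos_Suc ideal_prod_mem)
    then show "1 * S (- int a) (d * S (int (a + b)) j) \<in> Ipos \<sigma> J (Suc b)"
      by (simp add: S_hom S_add)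
  qed
  then show ?case
    using Suc.prems by (auto simp: Ipos_Suc)
qed simp

lemma Ineg_shift_up: "d \<in> Ineg \<sigma> H (a + b) \<Longrightarrow> S (int a) d \<in> Ineg \<sigma> H b"
proof (induction b arbitrary: d)
  case (Suc b)
  have "ideal_prod (Ineg \<sigma> H (a + b)) (S (- int (a + b) - 1) ` H) \<subseteq> {d. 1 * S (int a) d \<in> Ineg \<sigma> H (Suc b)}"
  proof (rule ideal_prod_least[OF is_ideal_S_preimage[OF is_ideal_Ineg]], clarify)
    fix d h assume "d \<in> Ineg \<sigma> H (a + b)" "h \<in> H"
    then have "S (int a) d * S (- int b - 1) h \<in> Ineg \<sigma> H (Suc b)"
      using Suc.IH by (simp add: Ineg_Suc ideal_prod_mem)
    then show "1 * S (int a) (d * S (- int (a + b) - 1) h) \<in> Ineg \<sigma> H (Suc b)"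
      by (simp add: S_hom S_add)
  qed
  then show ?case
    using Suc.prems by (auto simp: Ineg_Suc)
qed simp

lemma I_mult: "c \<in> I a \<Longrightarrow> d \<in> I b \<Longrightarrow> c * S a d \<in> I (a + b)"
proof -
  assume c: "c \<in> I a" and d: "d \<in> I b"
  consider "0 \<le> a" "0 \<le> b" | "a < 0" "b < 0" | "0 \<le> a" "b < 0" "0 \<le> a + b"
    | "0 \<le> a" "b < 0" "a + b < 0" | "a < 0" "0 \<le> b" "a + b \<le> 0" | "a < 0" "0 \<le> b" "0 < a + b"
    by linarith
  then show ?thesis
  proof cases
    case 1
    then show ?thesis
      using Ipos_mult[of c "nat a" d "nat b"] c d by (simp add: Iseq_def nat_add_distrib)
  next
    case 2
    then have "nat (- a) + nat (- b) = nat (- a - b)" by simp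
    then show ?thesis
      using Ineg_mult[of c "nat (- a)" d "nat (- b)"] c d 2 by (simp add: Iseq_def)
  next
    case 3
    then have "nat (a + b) \<le> nat a" by simp
    then have "c \<in> Ipos \<sigma> J (nat (a + b))"
      using c 3 Ipos_antimono by (auto simp: Iseq_def)
    then show ?thesis
      using 3 by (simp add: Iseq_def ideal_mult_right is_ideal_Ipos)
  next
    case 4
    then have "d \<in> Ineg \<sigma> H (nat a + nat (- (a + b)))"
      using d by (simp add: Iseq_def nat_add_distrib[symmetric])
    then have "S a d \<in> Ineg \<sigma> H (nat (- (a + b)))"
      using Ineg_shift_up 4 by fastforce
    then show ?thesis
      using 4 by (simp add: Iseq_def ideal_mult_left is_ideal_Ineg)
  next
    case 5
    then have "nat (- a - b) \<le> nat (- a)" by simp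
    then have "c \<in> I (a + b)"
      using c 5 Ineg_antimono by (auto simp: Iseq_def)
    then show ?thesis
      by (simp add: ideal_mult_right is_ideal_I)
  next
    case 6
    then have "d \<in> Ipos \<sigma> J (nat (- a) + nat (a + b))"
      using d by (simp add: Iseq_def nat_add_distrib[symmetric])
    then have "S a d \<in> Ipos \<sigma> J (nat (a + b))"
      using Ipos_shift_down 6 by fastforce
    then show ?thesis
      using 6 by (simp add: Iseq_def ideal_mult_left is_ideal_Ipos)
  qed
qed

end

section \<open>Modules over the BR algebra\<close>

locale br_module = br_algebra \<sigma> H J for \<sigma> :: "'r::comm_ring_1 \<Rightarrow> 'r" and H J +
  fixes act :: "(int \<Rightarrow> 'r) \<Rightarrow> 'm::ab_group_add \<Rightarrow> 'm"
  assumes bmodule: "bmodule \<sigma> H J act"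
begin

abbreviation Mw :: "'r set \<Rightarrow> 'm set" where "Mw \<equiv> weight_space act"

lemma monom_in_BR: "c \<in> I k \<Longrightarrow> monom c k \<in> BR \<sigma> H J"
proof -
  assume c: "c \<in> I k"
  have "finite {x. monom c k x \<noteq> 0}"
    by (rule finite_subset[of _ "{k}"]) (auto simp: monom_def)
  moreover have "monom c k x \<in> I x" for x
    using c by (auto simp: monom_def ideal_zero[OF is_ideal_I])
  ultimately show ?thesis
    by (simp add: BR_def)
qed

lemma act_add_right: "f \<in> BR \<sigma> H J \<Longrightarrow> act f (v + w) = act f v + act f w"
  using bmodule by (simp add: bmodule_def)

lemma act_add_left:
  "f \<in> BR \<sigma> H J \<Longrightarrow> g \<in> BR \<sigma> H J \<Longrightarrow> act (\<lambda>k. f k + g k) v = act f v + act g v"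
  using bmodule by (simp add: bmodule_def)

lemma act_sl_mult:
  "f \<in> BR \<sigma> H J \<Longrightarrow> g \<in> BR \<sigma> H J \<Longrightarrow> act (sl_mult \<sigma> f g) v = act f (act g v)"
  using bmodule by (simp add: bmodule_def)

lemma act_one: "act (monom 1 0) v = v"
  using bmodule by (simp add: bmodule_def)

lemma act_zero_right: "f \<in> BR \<sigma> H J \<Longrightarrow> act f 0 = 0"
  using act_add_right[of f 0 0] by simp

lemma act_monom_zero_right [simp]: "c \<in> I k \<Longrightarrow> act (monom c k) 0 = 0"
  by (simp add: act_zero_right monom_in_BR)

lemma act_monom_add:
  "a \<in> I k \<Longrightarrow> b \<in> I k \<Longrightarrow> act (monom (a + b) k) x = act (monom a k) x + act (monom b k) x"
proof -
  assume "a \<in> I k" "b \<in> I k"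
  moreover have "monom (a + b) k = (\<lambda>x. monom a k x + monom b k x)"
    by (auto simp: monom_def)
  ultimately show ?thesis
    by (simp add: act_add_left monom_in_BR)
qed

lemma act_monom_zero [simp]: "act (monom 0 k) x = 0"
  using act_monom_add[OF ideal_zero[OF is_ideal_I] ideal_zero[OF is_ideal_I], of k x] by simp

lemma act_monom_uminus: "a \<in> I k \<Longrightarrow> act (monom (- a) k) x = - act (monom a k) x"
  using act_monom_add[of a k "- a" x] ideal_uminus[OF is_ideal_I] by (simp add: add_eq_0_iff)

lemma sl_mult_monom: "sl_mult \<sigma> (monom a k) (monom b l) = monom (a * S k b) (k + l)"
proof (cases "a = 0")
  case False
  then have "{x. monom a k x \<noteq> 0} = {k}"
    by (auto simp: monom_def)
  then show ?thesis
    by (auto simp: sl_mult_def monom_def)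
qed (simp add: sl_mult_def monom_def fun_eq_iff)

lemma act_monom_act_monom:
  "a \<in> I k \<Longrightarrow> b \<in> I l \<Longrightarrow> act (monom a k) (act (monom b l) x) = act (monom (a * S k b) (k + l)) x"
  by (metis act_sl_mult monom_in_BR sl_mult_monom)

lemma act_weight_space: "x \<in> Mw p \<Longrightarrow> r \<in> p \<Longrightarrow> act (monom r 0) x = 0"
  by (simp add: weight_space_def)

lemma act_monom_weight_space: "x \<in> Mw p \<Longrightarrow> c \<in> I k \<Longrightarrow> act (monom c k) x \<in> Mw (S k ` p)"
  unfolding weight_space_def
proof (intro CollectI ballI)
  fix r assume x: "x \<in> {v. \<forall>r\<in>p. act (monom r 0) v = 0}" and c: "c \<in> I k" and "r \<in> S k ` p"
  then obtain s where s: "s \<in> p" "r = S k s" by auto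
  have "act (monom r 0) (act (monom c k) x) = act (monom (c * S k s) k) x"
    using act_monom_act_monom[of r 0 c k x] c s by (simp add: mult.commute)
  also have "\<dots> = act (monom c k) (act (monom s 0) x)"
    using act_monom_act_monom[of c k s 0 x] c by simp
  finally show "act (monom r 0) (act (monom c k) x) = 0"
    using x s c by simp
qed

lemma act_weight_space_unit: "x \<in> Mw p \<Longrightarrow> r - 1 \<in> p \<Longrightarrow> act (monom r 0) x = x"
  using act_monom_add[of "r - 1" 0 1 x] act_weight_space act_one by simp

lemma act_restriction:
  assumes f: "f \<in> BR \<sigma> H J" and "finite F"
  shows "(\<lambda>x. if x \<in> F then f x else 0) \<in> BR \<sigma> H J \<and>
    act (\<lambda>x. if x \<in> F then f x else 0) v = (\<Sum>k\<in>F. act (monom (f k) k) v)"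
  using \<open>finite F\<close>
proof (induction F rule: finite_induct)
  case empty
  have "(\<lambda>x. if x \<in> {} then f x else 0) = monom 0 0"
    by (simp add: monom_def)
  then show ?case
    by (simp add: monom_in_BR)
next
  case (insert k F)
  let ?res = "\<lambda>F x. if x \<in> F then f x else 0"
  have fk: "f k \<in> I k"
    using f by (simp add: BR_def)
  have split: "?res (insert k F) = (\<lambda>x. monom (f k) k x + ?res F x)"
    using insert.hyps by (auto simp: monom_def)
  have "finite {x. ?res (insert k F) x \<noteq> 0}"
    using insert.hyps by (auto intro: finite_subset[of _ "insert k F"])
  moreover have "?res (insert k F) x \<in> I x" for x
    using f by (auto simp: BR_def ideal_zero[OF is_ideal_I])
  moreover have "act (?res (insert k F)) v = act (monom (f k) k) v + act (?res F) v"
    unfolding split using insert.IH by (simp add: act_add_left monom_in_BR fk)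
  ultimately show ?case
    using insert by (simp add: BR_def)
qed

lemma act_as_sum:
  assumes f: "f \<in> BR \<sigma> H J"
  shows "act f v = (\<Sum>k | f k \<noteq> 0. act (monom (f k) k) v)"
proof -
  have "finite {k. f k \<noteq> 0}"
    using f by (simp add: BR_def)
  moreover have "(\<lambda>x. if f x \<noteq> 0 then f x else 0) = f"
    by auto
  ultimately show ?thesis
    using act_restriction[OF f, of "{k. f k \<noteq> 0}" v] by simp
qed

inductive_set cyclic_submodule :: "'m \<Rightarrow> 'm set" for w where
  gen: "c \<in> I k \<Longrightarrow> act (monom c k) w \<in> cyclic_submodule w"
| add: "x \<in> cyclic_submodule w \<Longrightarrow> y \<in> cyclic_submodule w \<Longrightarrow> x + y \<in> cyclic_submodule w"

lemma zero_in_cyclic_submodule: "0 \<in> cyclic_submodule w"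
  using cyclic_submodule.gen[of 0 0 w] by simp

lemma self_in_cyclic_submodule: "w \<in> cyclic_submodule w"
  using cyclic_submodule.gen[of 1 0 w] by (simp add: act_one)

lemma sum_in_cyclic_submodule:
  "(\<And>a. a \<in> A \<Longrightarrow> g a \<in> cyclic_submodule w) \<Longrightarrow> sum g A \<in> cyclic_submodule w"
  by (induction A rule: infinite_finite_induct)
    (auto simp: zero_in_cyclic_submodule intro: cyclic_submodule.add)

lemma uminus_in_cyclic_submodule: "x \<in> cyclic_submodule w \<Longrightarrow> - x \<in> cyclic_submodule w"
proof (induction rule: cyclic_submodule.induct)
  case (gen c k)
  then show ?case
    using cyclic_submodule.gen[of "- c" k w] act_monom_uminus ideal_uminus[OF is_ideal_I] by simp
next
  case (add x y)
  then show ?case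
    using cyclic_submodule.add[of "- x" w "- y"] by (simp add: add.commute)
qed

lemma act_in_cyclic_submodule:
  "x \<in> cyclic_submodule w \<Longrightarrow> f \<in> BR \<sigma> H J \<Longrightarrow> act f x \<in> cyclic_submodule w"
proof (induction rule: cyclic_submodule.induct)
  case (gen c k)
  have "act (monom (f j) j) (act (monom c k) w) \<in> cyclic_submodule w" for j
  proof -
    have "f j \<in> I j"
      using gen.prems by (simp add: BR_def)
    then show ?thesis
      using act_monom_act_monom I_mult gen.hyps cyclic_submodule.gen by simp
  qed
  then show ?case
    using act_as_sum[OF gen.prems] by (simp add: sum_in_cyclic_submodule)
next
  case (add x y)
  then show ?case
    by (simp add: act_add_right cyclic_submodule.add)
qed

lemma cyclic_submodule_eq_UNIV:
  assumes "simple_bmodule \<sigma> H J act" "w \<noteq> 0"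
  shows "cyclic_submodule w = UNIV"
proof -
  have "bsubmodule \<sigma> H J act (cyclic_submodule w)"
    unfolding bsubmodule_def
    by (auto simp: zero_in_cyclic_submodule uminus_in_cyclic_submodule act_in_cyclic_submodule
        intro: cyclic_submodule.add)
  then show ?thesis
    using assms self_in_cyclic_submodule[of w] unfolding simple_bmodule_def by auto
qed

definition R_submodule :: "'m set \<Rightarrow> bool" where
  "R_submodule W \<longleftrightarrow> 0 \<in> W \<and> (\<forall>x\<in>W. \<forall>y\<in>W. x + y \<in> W) \<and> (\<forall>r. \<forall>x\<in>W. act (monom r 0) x \<in> W)"

lemma R_submodule_zero: "R_submodule {0}"
  by (simp add: R_submodule_def)

lemma R_submodule_H_kernel: "R_submodule {x. \<forall>h\<in>H. act (monom (S (-1) h) (-1)) x = 0}"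
proof -
  have h: "S (-1) h \<in> I (-1)" if "h \<in> H" for h
    using H_subset_I_minus_1 that by blast
  have "act (monom (S (-1) h) (-1)) (act (monom r 0) x) = act (monom (S (-1) (h * r)) (-1)) x"
    if "h \<in> H" for h r x
    using act_monom_act_monom[OF h[OF that], of r 0 x] by (simp add: S_hom)
  then show ?thesis
    unfolding R_submodule_def using h ideal_mult_right[OF H]
    by (auto simp: act_add_right monom_in_BR)
qed

lemma is_ideal_act_preimage:
  assumes "R_submodule W"
  shows "is_ideal {e \<in> I k. act (monom e k) y \<in> W}"
  unfolding is_ideal_def
proof (intro conjI ballI allI impI)
  show "0 \<in> {e \<in> I k. act (monom e k) y \<in> W}"
    using assms by (simp add: R_submodule_def ideal_zero[OF is_ideal_I])
next
  fix a b assume "a \<in> {e \<in> I k. act (monom e k) y \<in> W}" "b \<in> {e \<in> I k. act (monom e k) y \<in> W}"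
  then show "a + b \<in> {e \<in> I k. act (monom e k) y \<in> W}"
    using assms by (simp add: R_submodule_def act_monom_add ideal_add[OF is_ideal_I])
next
  fix r a assume "a \<in> {e \<in> I k. act (monom e k) y \<in> W}"
  then have "act (monom (r * a) k) y = act (monom r 0) (act (monom a k) y)"
    and "act (monom a k) y \<in> W" "a \<in> I k"
    using act_monom_act_monom[of r 0 a k y] by simp_all
  then show "r * a \<in> {e \<in> I k. act (monom e k) y \<in> W}"
    using assms by (simp add: R_submodule_def ideal_mult_left[OF is_ideal_I])
qed

text \<open>Induction on K, peeling off the last factor of I(K + 1) = I(K) \<sigma>^K(J):
  (a \<sigma>^K(j)) t^(K+1) = (a t^K)(j t), and the e with e t^(K+1) y \<in> W form an ideal.\<close>
lemma Ipos_chain: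
  assumes W: "R_submodule W"
    and "\<And>i j v. i < K \<Longrightarrow> j \<in> J \<Longrightarrow> v \<in> V i \<Longrightarrow> act (monom j 1) v \<in> V (Suc i)"
    and "\<And>j v. j \<in> J \<Longrightarrow> v \<in> V K \<Longrightarrow> act (monom j 1) v \<in> W"
    and "y \<in> V 0" "e \<in> Ipos \<sigma> J (Suc K)"
  shows "act (monom e (int (Suc K))) y \<in> W"
  using assms(2-)
proof (induction K arbitrary: V y e)
  case (0 V y)
  have "ideal_prod (Ipos \<sigma> J 0) (S 0 ` J) \<subseteq> {e \<in> I 1. act (monom e 1) y \<in> W}"
  proof (rule ideal_prod_least[OF is_ideal_act_preimage[OF W]], clarsimp)
    fix a j assume "j \<in> J"
    then have "act (monom (a * j) 1) y = act (monom a 0) (act (monom j 1) y)"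
      using act_monom_act_monom[of a 0 j 1 y] J_subset_I_1 by auto
    then show "a * j \<in> I 1 \<and> act (monom (a * j) 1) y \<in> W"
      using 0 W \<open>j \<in> J\<close> J_subset_I_1 by (auto simp: R_submodule_def ideal_mult_left[OF is_ideal_I])
  qed
  then show ?case
    using "0.prems" by (auto simp: Ipos_Suc)
next
  case (Suc K V y)
  have "ideal_prod (Ipos \<sigma> J (Suc K)) (S (int (Suc K)) ` J) \<subseteq>
      {e \<in> I (int (Suc (Suc K))). act (monom e (int (Suc (Suc K)))) y \<in> W}"
  proof (rule ideal_prod_least[OF is_ideal_act_preimage[OF W]])
    fix a b assume a: "a \<in> Ipos \<sigma> J (Suc K)" and "b \<in> S (int (Suc K)) ` J"
    then obtain j where j: "j \<in> J" and b: "b = S (int (Suc K)) j" by blast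
    have aj: "a * S (int (Suc K)) j \<in> I (int (Suc (Suc K)))"
      using a j by (simp only: I_of_nat Ipos_Suc[of "Suc K"] ideal_prod_mem image_eqI)
    have "act (monom a (int (Suc K))) (act (monom j 1) y) =
        act (monom (a * S (int (Suc K)) j) (int (Suc K) + 1)) y"
      using a j J_subset_I_1 by (intro act_monom_act_monom) (auto simp only: I_of_nat)
    then have "act (monom (a * S (int (Suc K)) j) (int (Suc (Suc K)))) y =
        act (monom a (int (Suc K))) (act (monom j 1) y)"
      by (simp add: add.commute)
    moreover have "act (monom a (int (Suc K))) (act (monom j 1) y) \<in> W"
      using Suc.IH[of "\<lambda>i. V (Suc i)"] Suc.prems a j by (simp del: of_nat_Suc)
    ultimately show "a * b \<in> {e \<in> I (int (Suc (Suc K))). act (monom e (int (Suc (Suc K)))) y \<in> W}"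
      using aj b by simp
  qed
  then show ?case
    using Suc.prems by (auto simp: Ipos_Suc[of "Suc K"] simp del: of_nat_Suc)
qed

lemma Ineg_chain:
  assumes W: "R_submodule W"
    and "\<And>i h v. i < K \<Longrightarrow> h \<in> H \<Longrightarrow> v \<in> V i \<Longrightarrow> act (monom (S (-1) h) (-1)) v \<in> V (Suc i)"
    and "\<And>h v. h \<in> H \<Longrightarrow> v \<in> V K \<Longrightarrow> act (monom (S (-1) h) (-1)) v \<in> W"
    and "y \<in> V 0" "e \<in> Ineg \<sigma> H (Suc K)"
  shows "act (monom e (- int (Suc K))) y \<in> W"
  using assms(2-)
proof (induction K arbitrary: V y e)
  case (0 V y)
  have "ideal_prod (Ineg \<sigma> H 0) (S (-1) ` H) \<subseteq> {e \<in> I (-1). act (monom e (-1)) y \<in> W}"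
  proof (rule ideal_prod_least[OF is_ideal_act_preimage[OF W]], clarsimp)
    fix a h assume "h \<in> H"
    then have "act (monom (a * S (-1) h) (-1)) y = act (monom a 0) (act (monom (S (-1) h) (-1)) y)"
      using H_subset_I_minus_1 act_monom_act_monom[of a 0 "S (-1) h" "-1" y] by auto
    then show "a * S (-1) h \<in> I (-1) \<and> act (monom (a * S (-1) h) (-1)) y \<in> W"
      using 0 W \<open>h \<in> H\<close> H_subset_I_minus_1
      by (auto simp: R_submodule_def ideal_mult_left[OF is_ideal_I])
  qed
  then show ?case
    using "0.prems" by (auto simp: Ineg_Suc)
next
  case (Suc K V y)
  let ?k = "- int (Suc K)"
  have "ideal_prod (Ineg \<sigma> H (Suc K)) (S (?k - 1) ` H) \<subseteq> {e \<in> I (?k - 1). act (monom e (?k - 1)) y \<in> W}"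
  proof (rule ideal_prod_least[OF is_ideal_act_preimage[OF W]])
    fix a b assume a: "a \<in> Ineg \<sigma> H (Suc K)" and "b \<in> S (?k - 1) ` H"
    then obtain h where h: "h \<in> H" and b: "b = S (?k - 1) h" by blast
    have "a * b \<in> Ineg \<sigma> H (Suc (Suc K))"
      unfolding Ineg_Suc[of "Suc K"] using a h b by (simp add: ideal_prod_mem)
    then have ab: "a * b \<in> I (?k - 1)"
      using I_minus_of_nat[of "Suc (Suc K)"] by (simp add: algebra_simps)
    have "act (monom a ?k) (act (monom (S (-1) h) (-1)) y) = act (monom (a * S ?k (S (-1) h)) (?k + -1)) y"
      using a h H_subset_I_minus_1 I_minus_of_nat[of "Suc K"] by (intro act_monom_act_monom) auto
    then have "act (monom (a * b) (?k - 1)) y = act (monom a ?k) (act (monom (S (-1) h) (-1)) y)"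
      by (simp add: S_add b)
    moreover have "act (monom a ?k) (act (monom (S (-1) h) (-1)) y) \<in> W"
      using Suc.IH[of "\<lambda>i. V (Suc i)"] Suc.prems a h by simp
    ultimately show "a * b \<in> {e \<in> I (?k - 1). act (monom e (?k - 1)) y \<in> W}"
      using ab by simp
  qed
  moreover have "e \<in> ideal_prod (Ineg \<sigma> H (Suc K)) (S (?k - 1) ` H)"
    using Suc.prems(4) by (simp only: Ineg_Suc[of "Suc K"])
  moreover have "?k - 1 = - int (Suc (Suc K))"
    by simp
  ultimately show ?case
    by auto
qed

lemma Ipos_annihilates:
  assumes "\<And>i j v. i < l \<Longrightarrow> j \<in> J \<Longrightarrow> v \<in> V i \<Longrightarrow> act (monom j 1) v \<in> V (Suc i)"
    and "\<And>j v. j \<in> J \<Longrightarrow> v \<in> V l \<Longrightarrow> act (monom j 1) v = 0"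
    and "y \<in> V 0" "e \<in> Ipos \<sigma> J (Suc K)" "l \<le> K"
  shows "act (monom e (int (Suc K))) y = 0"
proof -
  let ?V = "\<lambda>i. if i \<le> l then V i else {0}"
  have "act (monom e (int (Suc K))) y \<in> {0}"
    using R_submodule_zero
  proof (rule Ipos_chain[where V = ?V])
    show "act (monom j 1) v \<in> ?V (Suc i)" if "i < K" "j \<in> J" "v \<in> ?V i" for i j v
      using that assms(1,2) J_subset_I_1 by (cases i l rule: linorder_cases) auto
    show "act (monom j 1) v \<in> {0}" if "j \<in> J" "v \<in> ?V K" for j v
      using that assms(2,5) J_subset_I_1 by (cases "K = l") auto
  qed (use assms(3,4) in auto)
  then show ?thesis by simp
qed

lemma Ineg_annihilates:
  assumes "\<And>i h v. i < l \<Longrightarrow> h \<in> H \<Longrightarrow> v \<in> V i \<Longrightarrow> act (monom (S (-1) h) (-1)) v \<in> V (Suc i)"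
    and "\<And>h v. h \<in> H \<Longrightarrow> v \<in> V l \<Longrightarrow> act (monom (S (-1) h) (-1)) v = 0"
    and "y \<in> V 0" "e \<in> Ineg \<sigma> H (Suc K)" "l \<le> K"
  shows "act (monom e (- int (Suc K))) y = 0"
proof -
  let ?V = "\<lambda>i. if i \<le> l then V i else {0}"
  have "act (monom e (- int (Suc K))) y \<in> {0}"
    using R_submodule_zero
  proof (rule Ineg_chain[where V = ?V])
    show "act (monom (S (-1) h) (-1)) v \<in> ?V (Suc i)" if "i < K" "h \<in> H" "v \<in> ?V i" for i h v
      using that assms(1,2) H_subset_I_minus_1 by (cases i l rule: linorder_cases) auto
    show "act (monom (S (-1) h) (-1)) v \<in> {0}" if "h \<in> H" "v \<in> ?V K" for h v
      using that assms(2,5) H_subset_I_minus_1 by (cases "K = l") auto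
  qed (use assms(3,4) in auto)
  then show ?thesis by simp
qed

text \<open>At a break p, i.e. HJ \<subseteq> \<sigma>(p), the composites h t^-1 j t and j t h t^-1 are
  multiplications by \<sigma>^-1(hj) \<in> p and hj \<in> \<sigma>(p).\<close>
lemma H_annihilates_J_at_break:
  assumes HJ: "ideal_prod H J \<subseteq> \<sigma> ` p" and v: "v \<in> Mw p" and h: "h \<in> H" and j: "j \<in> J"
  shows "act (monom (S (-1) h) (-1)) (act (monom j 1) v) = 0"
proof -
  have "S (-1) (h * j) \<in> p"
    using HJ ideal_prod_mem[OF h j] by (auto simp: S_minus_1 inv_f_f bij_sigma bij_is_inj)
  moreover have "act (monom (S (-1) h) (-1)) (act (monom j 1) v) = act (monom (S (-1) (h * j)) 0) v"
    using act_monom_act_monom[of "S (-1) h" "-1" j 1 v] H_subset_I_minus_1 J_subset_I_1 h j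
    by (auto simp: S_hom)
  ultimately show ?thesis
    using act_weight_space[OF v] by simp
qed

lemma J_annihilates_H_at_break:
  assumes HJ: "ideal_prod H J \<subseteq> \<sigma> ` p" and w: "w \<in> Mw (\<sigma> ` p)" and h: "h \<in> H" and j: "j \<in> J"
  shows "act (monom j 1) (act (monom (S (-1) h) (-1)) w) = 0"
proof -
  have "act (monom j 1) (act (monom (S (-1) h) (-1)) w) = act (monom (h * j) 0) w"
    using act_monom_act_monom[of j 1 "S (-1) h" "-1" w] H_subset_I_minus_1 J_subset_I_1 h j
    by (auto simp: S_add mult.commute)
  then show ?thesis
    using act_weight_space[OF w] HJ ideal_prod_mem[OF h j] by auto
qed

lemma negative_part_kills_J_image:
  assumes HJ: "ideal_prod H J \<subseteq> \<sigma> ` p" and c: "c \<in> I k" "k < 0" and j: "j \<in> J" and v: "v \<in> Mw p"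
  shows "act (monom c k) (act (monom j 1) v) = 0"
proof -
  define K where "K = nat (- k) - 1"
  have k: "k = - int (Suc K)"
    using c(2) by (simp add: K_def)
  have "c \<in> Ineg \<sigma> H (Suc K)"
    using c(1) I_minus_of_nat[of "Suc K"] by (simp only: k)
  then show ?thesis
    using Ineg_annihilates[of 0 "\<lambda>_. {act (monom j 1) v}"] H_annihilates_J_at_break[OF HJ v _ j]
    by (simp only: k) auto
qed

lemma periodic_part_of_J_image_in_H_kernel:
  assumes HJ: "ideal_prod H J \<subseteq> \<sigma> ` p" and c: "c \<in> I (int K)" and per: "S (int K) ` p = p"
    and j: "j \<in> J" and v: "v \<in> Mw p"
  shows "act (monom c (int K)) (act (monom j 1) v) \<in> {x. \<forall>h\<in>H. act (monom (S (-1) h) (-1)) x = 0}"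
proof -
  let ?Z = "{x. \<forall>h\<in>H. act (monom (S (-1) h) (-1)) x = 0}"
  have "act (monom c (int K)) (act (monom j 1) v) = act (monom (c * S (int K) j) (int (Suc K))) v"
    using act_monom_act_monom[OF c, of j 1 v] j J_subset_I_1 by (auto simp: add.commute)
  moreover have "c * S (int K) j \<in> Ipos \<sigma> J (Suc K)"
    using I_mult[OF c, of j 1] j J_subset_I_1 I_of_nat[of "Suc K"] by (auto simp: add.commute)
  moreover have "act (monom e (int (Suc K))) v \<in> ?Z" if "e \<in> Ipos \<sigma> J (Suc K)" for e
  proof (rule Ipos_chain[OF R_submodule_H_kernel, where V = "\<lambda>i. Mw (S (int i) ` p)"])
    show "act (monom j' 1) v' \<in> Mw (S (int (Suc i)) ` p)" if "j' \<in> J" "v' \<in> Mw (S (int i) ` p)" for i j' v'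
      using act_monom_weight_space[OF that(2), of j' 1] that(1) J_subset_I_1
      by (auto simp: S_image_image add.commute)
    show "act (monom j' 1) v' \<in> ?Z" if "j' \<in> J" "v' \<in> Mw (S (int K) ` p)" for j' v'
      using H_annihilates_J_at_break[OF HJ] that per by auto
  qed (use v that in auto)
  ultimately show ?thesis
    by simp
qed

lemma positive_part_kills_H_image:
  assumes HJ: "ideal_prod H J \<subseteq> \<sigma> ` p" and c: "c \<in> I k" "0 < k" and h: "h \<in> H"
    and w: "w \<in> Mw (\<sigma> ` p)"
  shows "act (monom c k) (act (monom (S (-1) h) (-1)) w) = 0"
proof -
  define K where "K = nat k - 1"
  have k: "k = int (Suc K)"
    using c(2) by (simp add: K_def)
  have "c \<in> Ipos \<sigma> J (Suc K)"
    using c(1) I_of_nat[of "Suc K"] by (simp only: k)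
  then show ?thesis
    using Ipos_annihilates[of 0 "\<lambda>_. {act (monom (S (-1) h) (-1)) w}"] J_annihilates_H_at_break[OF HJ w h]
    by (simp only: k) auto
qed

text \<open>The key consequence of simplicity: every vector of M is a sum of vectors
  c t^k w, and multiplying by an element separating p from the other points of the
  orbit picks out those c t^k w that have weight p.\<close>
lemma weight_space_subset_components:
  assumes simple: "simple_bmodule \<sigma> H J act"
    and Q: "finite Q" "\<And>q'. q' \<in> Q \<Longrightarrow> maximal_ideal q'" "\<And>k. S k ` q \<in> Q" "p \<in> Q"
    and w: "w \<in> Mw q" "w \<noteq> 0"
    and Z: "R_submodule Z"
    and components: "\<And>c k. c \<in> I k \<Longrightarrow> S k ` q = p \<Longrightarrow> act (monom c k) w \<in> Z"
  shows "Mw p \<subseteq> Z"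
proof
  obtain r where r: "r - 1 \<in> p" "\<forall>q'\<in>Q - {p}. r \<in> q'"
    using maximal_ideals_separating_element[of p "Q - {p}"] Q by auto
  have rZ: "act (monom r 0) x \<in> Z" if "x \<in> cyclic_submodule w" for x
    using that
  proof (induction rule: cyclic_submodule.induct)
    case (gen c k)
    show ?case
    proof (cases "S k ` q = p")
      case True
      then show ?thesis
        using act_monom_act_monom[of r 0 c k w] components[of "r * c" k] gen
        by (simp add: ideal_mult_left[OF is_ideal_I])
    next
      case False
      then show ?thesis
        using act_weight_space[OF act_monom_weight_space[OF w(1) gen]] r(2) Q(3) Z
        by (simp add: R_submodule_def)
    qed
  next
    case (add x y)
    then show ?case
      using Z by (simp add: R_submodule_def act_add_right monom_in_BR)
  qed
  fix x assume "x \<in> Mw p"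
  then have "x = act (monom r 0) x"
    using act_weight_space_unit[OF _ r(1)] by simp
  then show "x \<in> Z"
    using rZ[of x] cyclic_submodule_eq_UNIV[OF simple w(2)] by simp
qed

end

section \<open>Simple modules supported on a finite orbit\<close>

locale br_orbit = br_module \<sigma> H J act for \<sigma> :: "'r::comm_ring_1 \<Rightarrow> 'r" and H J and act +
  fixes n :: nat and Orb :: "'r set set" and m :: "'r set"
  assumes per: "\<sigma> ^^ n = id"
    and orb: "\<exists>m0. maximal_ideal m0 \<and> Orb = sigma_orbit \<sigma> m0"
    and fin: "finite Orb" and card: "card Orb = n"
    and simple: "simple_bmodule \<sigma> H J act"
    and mO: "m \<in> Orb" and brk: "is_break \<sigma> H J m"
begin

definition P :: "int \<Rightarrow> 'r set" where
  "P k = S k ` m"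

lemma n_pos: "0 < n"
  using fin card mO card_gt_0_iff by auto

lemma S_plus_period: "S (k + int n) = S k"
  using S_comp[of k "int n"] per by (simp add: S_of_nat)

lemma P_mod: "P (k mod int n) = P k"
proof -
  have "S (a + int n * q) = S a" for a q
  proof (induction q rule: int_induct[of _ 0])
    case (step1 i)
    then show ?case
      using S_plus_period[of "a + int n * i"] by (simp add: algebra_simps)
  next
    case (step2 i)
    then show ?case
      using S_plus_period[of "a + int n * (i - 1)"] by (simp add: algebra_simps)
  qed simp
  then show ?thesis
    unfolding P_def by (metis mod_mult_div_eq)
qed

lemma P_shift: "S a ` P b = P (a + b)"
  by (simp add: P_def S_image_image)

lemma P_0: "P 0 = m"
  by (simp add: P_def)

lemma P_1: "P 1 = \<sigma> ` m"
  by (simp add: P_def S_1)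

lemma maximal_ideal_P: "maximal_ideal (P k)"
  using brk maximal_ideal_S_image by (simp add: P_def is_break_def)

lemma orbit_eq_range_P: "Orb = range P"
proof -
  obtain m0 k0 where m0: "Orb = sigma_orbit \<sigma> m0" and k0: "m = S k0 ` m0"
    using orb mO by (auto simp: sigma_orbit_def)
  have "S k ` m0 = S (k - k0) ` m" for k
    by (simp add: k0 S_image_image)
  then have "S k ` m0 = P (k - k0)" for k
    by (simp add: P_def)
  then show ?thesis
    unfolding m0 sigma_orbit_def by (auto intro: exI[of _ "_ + k0"])
qed

lemma P_in_orbit: "P k \<in> Orb"
  using orbit_eq_range_P by blast

lemma P_eq_iff: "P a = P b \<longleftrightarrow> int n dvd a - b"
proof
  have "Orb = (\<lambda>i. P (int i)) ` {..<n}"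
  proof (intro antisym subsetI)
    fix q assume "q \<in> Orb"
    then obtain k where "q = P k"
      using orbit_eq_range_P by blast
    then have "q = P (int (nat (k mod int n)))" and "nat (k mod int n) < n"
      using n_pos P_mod by (simp_all add: nat_less_iff)
    then show "q \<in> (\<lambda>i. P (int i)) ` {..<n}" by blast
  qed (use orbit_eq_range_P in blast)
  then have "inj_on (\<lambda>i. P (int i)) {..<n}"
    using card by (simp add: inj_on_iff_eq_card)
  moreover assume "P a = P b"
  then have "P (int (nat (a mod int n))) = P (int (nat (b mod int n)))"
    using n_pos P_mod by simp
  moreover have "nat (a mod int n) \<in> {..<n}" "nat (b mod int n) \<in> {..<n}"
    using n_pos by (auto simp: nat_less_iff)
  ultimately have "nat (a mod int n) = nat (b mod int n)"
    by (meson inj_onD)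
  then show "int n dvd a - b"
    using n_pos by (simp add: eq_nat_nat_iff mod_eq_dvd_iff)
next
  assume "int n dvd a - b"
  then show "P a = P b"
    by (metis P_mod mod_eq_dvd_iff)
qed

lemma orbit_index_plus: "q \<in> Orb \<Longrightarrow> \<exists>l<n. q = P (b + int l)"
proof -
  assume "q \<in> Orb"
  then obtain i where i: "q = P i"
    using orbit_eq_range_P by blast
  have "(b + (i - b) mod int n) mod int n = i mod int n"
    by (simp add: mod_add_right_eq)
  then have "P (b + int (nat ((i - b) mod int n))) = P i"
    using n_pos by (metis P_mod pos_mod_sign int_nat_eq of_nat_0_less_iff)
  moreover have "nat ((i - b) mod int n) < n"
    using n_pos by (simp add: nat_less_iff)
  ultimately show ?thesis
    using i by metis
qed

lemma orbit_index_minus: "q \<in> Orb \<Longrightarrow> \<exists>l<n. q = P (b - int l)"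
proof -
  assume "q \<in> Orb"
  then obtain i where i: "q = P i"
    using orbit_eq_range_P by blast
  have "(b - (b - i) mod int n) mod int n = i mod int n"
    by (simp add: mod_diff_right_eq)
  then have "P (b - int (nat ((b - i) mod int n))) = P i"
    using n_pos by (metis P_mod pos_mod_sign int_nat_eq of_nat_0_less_iff)
  moreover have "nat ((b - i) mod int n) < n"
    using n_pos by (simp add: nat_less_iff)
  ultimately show ?thesis
    using i by metis
qed

lemma ideal_prod_HJ_subset: "ideal_prod H J \<subseteq> \<sigma> ` m"
  using brk by (simp add: is_break_def S_B_def)

lemma J_raises_weight: "j \<in> J \<Longrightarrow> v \<in> Mw (P i) \<Longrightarrow> act (monom j 1) v \<in> Mw (P (i + 1))"
  using act_monom_weight_space[of v "P i" j 1] J_subset_I_1 by (auto simp: P_shift add.commute)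

lemma H_lowers_weight: "h \<in> H \<Longrightarrow> v \<in> Mw (P i) \<Longrightarrow> act (monom (S (-1) h) (-1)) v \<in> Mw (P (i - 1))"
  using act_monom_weight_space[of v "P i" "S (-1) h" "-1"] H_subset_I_minus_1 by (auto simp: P_shift)

lemma weight_space_P_subset:
  assumes "R_submodule Z" "w \<in> Mw (P a)" "w \<noteq> 0"
    and "\<And>c k. c \<in> I k \<Longrightarrow> int n dvd k + a - b \<Longrightarrow> act (monom c k) w \<in> Z"
  shows "Mw (P b) \<subseteq> Z"
proof (rule weight_space_subset_components[OF simple fin _ _ P_in_orbit assms(2,3,1)])
  show "maximal_ideal q" if "q \<in> Orb" for q
    using that maximal_ideal_P orbit_eq_range_P by auto
  show "S k ` P a \<in> Orb" for k
    by (simp add: P_shift P_in_orbit)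
  show "act (monom c k) w \<in> Z" if "c \<in> I k" "S k ` P a = P b" for c k
    using that assms(4) by (simp add: P_shift P_eq_iff)
qed

lemma not_J_break_and_H_break: "\<not> (J_break \<sigma> H J act m \<and> H_break \<sigma> H J act m)"
proof
  assume "J_break \<sigma> H J act m \<and> H_break \<sigma> H J act m"
  then obtain j v h0 w' where j: "j \<in> J" and v: "v \<in> Mw (P 0)" and w: "act (monom j 1) v \<noteq> 0"
    and h0: "h0 \<in> H" and w': "w' \<in> Mw (P 1)" "act (monom (S (-1) h0) (-1)) w' \<noteq> 0"
    by (auto simp: J_break_def H_break_def P_0 P_1 S_minus_1)
  let ?Z = "{x. \<forall>h\<in>H. act (monom (S (-1) h) (-1)) x = 0}"
  have "Mw (P 1) \<subseteq> ?Z"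
  proof (rule weight_space_P_subset[OF R_submodule_H_kernel J_raises_weight[OF j v] w])
    fix c k assume c: "c \<in> I k" and "int n dvd k + (0 + 1) - 1"
    then have k: "int n dvd k"
      by simp
    show "act (monom c k) (act (monom j 1) v) \<in> ?Z"
    proof (cases "k < 0")
      case True
      then show ?thesis
        using negative_part_kills_J_image[OF ideal_prod_HJ_subset c True j] v H_subset_I_minus_1
        by (auto simp: P_0)
    next
      case False
      define K where "K = nat k"
      have K: "k = int K"
        using False by (simp add: K_def)
      moreover have "S (int K) ` m = m"
        using k K P_eq_iff[of "int K" 0] P_0 by (simp add: P_def)
      ultimately show ?thesis
        using periodic_part_of_J_image_in_H_kernel[OF ideal_prod_HJ_subset _ _ j] c v by (simp add: P_0)
    qed
  qed
  then show False
    using w' h0 by blast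
qed

lemma J_break_witness:
  assumes "J_break \<sigma> H J act m" and l: "Suc l < n"
  shows "\<exists>j\<in>J. \<exists>v\<in>Mw (P (int l + 1)). act (monom j 1) v \<noteq> 0"
proof (rule ccontr)
  assume "\<not> ?thesis"
  then have kill: "act (monom j 1) v = 0" if "j \<in> J" "v \<in> Mw (P (int l + 1))" for j v
    using that by blast
  obtain j0 v0 where j0: "j0 \<in> J" and v0: "v0 \<in> Mw (P 0)" and w: "act (monom j0 1) v0 \<noteq> 0"
    using assms(1) by (auto simp: J_break_def P_0)
  have "Mw (P 0) \<subseteq> {0}"
  proof (rule weight_space_P_subset[OF R_submodule_zero J_raises_weight[OF j0 v0] w])
    fix c k assume c: "c \<in> I k" and "int n dvd k + (0 + 1) - 0"
    then have k: "int n dvd k + 1"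
      by simp
    show "act (monom c k) (act (monom j0 1) v0) \<in> {0}"
    proof (cases "k < 0")
      case True
      then show ?thesis
        using negative_part_kills_J_image[OF ideal_prod_HJ_subset c True j0] v0 by (simp add: P_0)
    next
      case False
      then have "int n \<le> k + 1"
        using k by (simp add: zdvd_imp_le)
      define K where "K = nat k - 1"
      have K: "k = int (Suc K)" "l \<le> K"
        using \<open>int n \<le> k + 1\<close> l by (simp_all add: K_def)
      have "c \<in> Ipos \<sigma> J (Suc K)"
        using c I_of_nat[of "Suc K"] by (simp only: K(1))
      have "act (monom c (int (Suc K))) (act (monom j0 1) v0) = 0"
      proof (rule Ipos_annihilates[where V = "\<lambda>i. Mw (P (int i + 1))"])
        show "act (monom j 1) v \<in> Mw (P (int (Suc i) + 1))" if "j \<in> J" "v \<in> Mw (P (int i + 1))" for i j v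
          using J_raises_weight[OF that] by simp
      qed (use kill K \<open>c \<in> Ipos \<sigma> J (Suc K)\<close> J_raises_weight[OF j0 v0] in auto)
      then show ?thesis
        by (simp add: K(1))
    qed
  qed
  then have "v0 = 0"
    using v0 by blast
  then show False
    using w j0 J_subset_I_1 by auto
qed

lemma H_break_witness:
  assumes "H_break \<sigma> H J act m" and l: "Suc l < n"
  shows "\<exists>h\<in>H. \<exists>w\<in>Mw (P (- int l)). act (monom (S (-1) h) (-1)) w \<noteq> 0"
proof (rule ccontr)
  assume "\<not> ?thesis"
  then have kill: "act (monom (S (-1) h) (-1)) w = 0" if "h \<in> H" "w \<in> Mw (P (- int l))" for h w
    using that by blast
  obtain h0 w0 where h0: "h0 \<in> H" and w0: "w0 \<in> Mw (P 1)" and u: "act (monom (S (-1) h0) (-1)) w0 \<noteq> 0"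
    using assms(1) by (auto simp: H_break_def P_1 S_minus_1)
  have "Mw (P 1) \<subseteq> {0}"
  proof (rule weight_space_P_subset[OF R_submodule_zero H_lowers_weight[OF h0 w0] u])
    fix c k assume c: "c \<in> I k" and "int n dvd k + (1 - 1) - 1"
    then have k: "int n dvd 1 - k"
      by (simp add: dvd_diff_commute)
    show "act (monom c k) (act (monom (S (-1) h0) (-1)) w0) \<in> {0}"
    proof (cases "0 < k")
      case True
      then show ?thesis
        using positive_part_kills_H_image[OF ideal_prod_HJ_subset c True h0] w0 by (simp add: P_1)
    next
      case False
      then have "int n \<le> 1 - k"
        using k by (simp add: zdvd_imp_le)
      define K where "K = nat (- k) - 1"
      have K: "k = - int (Suc K)" "l \<le> K"
        using \<open>int n \<le> 1 - k\<close> l by (simp_all add: K_def)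
      have "c \<in> Ineg \<sigma> H (Suc K)"
        using c I_minus_of_nat[of "Suc K"] by (simp only: K(1))
      have "act (monom c (- int (Suc K))) (act (monom (S (-1) h0) (-1)) w0) = 0"
      proof (rule Ineg_annihilates[where V = "\<lambda>i. Mw (P (- int i))"])
        show "act (monom (S (-1) h) (-1)) v \<in> Mw (P (- int (Suc i)))" if "h \<in> H" "v \<in> Mw (P (- int i))" for i h v
          using H_lowers_weight[OF that] by (simp only: of_nat_Suc minus_add_distrib diff_conv_add_uminus add.commute)
      qed (use kill K \<open>c \<in> Ineg \<sigma> H (Suc K)\<close> H_lowers_weight[OF h0 w0] in auto)
      then show ?thesis
        by (simp add: K(1))
    qed
  qed
  then have "w0 = 0"
    using w0 by blast
  then show False
    using u h0 H_subset_I_minus_1 by auto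
qed

lemma J_break_everywhere:
  assumes Jb: "J_break \<sigma> H J act m" and "m' \<in> Orb"
  shows "(is_break \<sigma> H J m' \<longrightarrow> J_break \<sigma> H J act m') \<and> m' \<in> supp_R act"
proof -
  obtain l where l: "l < n" "m' = P (int l + 1)"
    using orbit_index_plus[OF \<open>m' \<in> Orb\<close>, of 1] by (auto simp: add.commute)
  show ?thesis
  proof (cases "Suc l < n")
    case True
    then obtain j v where "j \<in> J" "v \<in> Mw m'" "act (monom j 1) v \<noteq> 0"
      using J_break_witness[OF Jb] l by blast
    moreover have "v \<noteq> 0"
      using calculation J_subset_I_1 by auto
    ultimately show ?thesis
      using maximal_ideal_P l by (auto simp: J_break_def supp_R_def)
  next
    case False
    then have "int l + 1 = int n"
      using l by simp
    then have "m' = m"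
      using l P_eq_iff[of "int l + 1" 0] P_0 by simp
    moreover obtain j v where "j \<in> J" "v \<in> Mw m" "act (monom j 1) v \<noteq> 0"
      using Jb by (auto simp: J_break_def)
    moreover have "v \<noteq> 0"
      using calculation J_subset_I_1 by auto
    ultimately show ?thesis
      using Jb maximal_ideal_P[of 0] by (auto simp: supp_R_def P_0)
  qed
qed

lemma H_break_everywhere:
  assumes Hb: "H_break \<sigma> H J act m" and "m' \<in> Orb"
  shows "(is_break \<sigma> H J m' \<longrightarrow> H_break \<sigma> H J act m') \<and> m' \<in> supp_R act"
proof -
  obtain l where l: "l < n" "m' = P (- int l)"
    using orbit_index_minus[OF \<open>m' \<in> Orb\<close>, of 0] by auto
  obtain h0 w0 where h0: "h0 \<in> H" and w0: "w0 \<in> Mw (P 1)" "act (monom (S (-1) h0) (-1)) w0 \<noteq> 0"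
    using Hb by (auto simp: H_break_def P_1 S_minus_1)
  then have "w0 \<noteq> 0"
    using H_subset_I_minus_1 by auto
  have "m' \<in> supp_R act"
  proof (cases "Suc l < n")
    case True
    then obtain h w where "h \<in> H" "w \<in> Mw m'" "act (monom (S (-1) h) (-1)) w \<noteq> 0"
      using H_break_witness[OF Hb] l by blast
    then have "w \<noteq> 0"
      using H_subset_I_minus_1 by auto
    then show ?thesis
      using \<open>w \<in> Mw m'\<close> maximal_ideal_P l by (auto simp: supp_R_def)
  next
    case False
    then have "- int l - 1 = - int n"
      using l by simp
    then have "m' = P 1"
      using l P_eq_iff[of "- int l" 1] by simp
    then show ?thesis
      using w0 \<open>w0 \<noteq> 0\<close> maximal_ideal_P by (auto simp: supp_R_def)
  qed
  moreover have "H_break \<sigma> H J act m'" if "is_break \<sigma> H J m'"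
  proof (cases l)
    case 0
    then show ?thesis
      using Hb l P_0 by simp
  next
    case (Suc l')
    then obtain h w where "h \<in> H" "w \<in> Mw (P (- int l'))" "act (monom (S (-1) h) (-1)) w \<noteq> 0"
      using H_break_witness[OF Hb, of l'] l by auto
    moreover have "\<sigma> ` m' = P (- int l')"
      using l Suc by (simp add: P_1[symmetric] P_shift[of 1, simplified S_1])
    ultimately show ?thesis
      using that by (auto simp: H_break_def S_minus_1)
  qed
  ultimately show ?thesis
    by blast
qed

end

theorem lemma3p17:
  fixes \<phi> :: "'k::field \<Rightarrow> 'r::idom"
    and \<sigma> :: "'r \<Rightarrow> 'r"
    and H J :: "'r set"
    and act :: "(int \<Rightarrow> 'r) \<Rightarrow> 'm::ab_group_add \<Rightarrow> 'm"
    and Orb :: "'r set set"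
    and n :: nat
    and m :: "'r set"
  assumes alg: "alg_struct \<phi>"
    and aut: "ring_aut \<sigma>"
    and klin: "\<forall>c. \<sigma> (\<phi> c) = \<phi> c"
    and H: "is_ideal H" and J: "is_ideal J"
    and nonzero: "\<forall>k. Iseq \<sigma> H J k \<noteq> {0}"
    and per: "\<sigma> ^^ n = id"
    and orb: "\<exists>m0. maximal_ideal m0 \<and> Orb = sigma_orbit \<sigma> m0"
    and fin: "finite Orb" and size: "card Orb = n"
    and simple: "simple_bmodule \<sigma> H J act"
    and weight: "weight_module act"
    and supp: "supp_R act \<subseteq> Orb"
    and mO: "m \<in> Orb" and brk: "is_break \<sigma> H J m"
  shows "\<not> (J_break \<sigma> H J act m \<and> H_break \<sigma> H J act m) \<and>
         (J_break \<sigma> H J act m \<longrightarrow>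
            (\<forall>m'\<in>Orb. is_break \<sigma> H J m' \<longrightarrow> J_break \<sigma> H J act m') \<and> supp_R act = Orb) \<and>
         (H_break \<sigma> H J act m \<longrightarrow>
            (\<forall>m'\<in>Orb. is_break \<sigma> H J m' \<longrightarrow> H_break \<sigma> H J act m') \<and> supp_R act = Orb)"
proof -
  interpret br_orbit \<sigma> H J act n Orb m
    using aut H J per orb fin size simple mO brk by unfold_locales (auto simp: simple_bmodule_def)
  show ?thesis
    using not_J_break_and_H_break J_break_everywhere H_break_everywhere supp by blast
qed

end
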